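(* Let $a\in\mathbb{R}$ and let $f$ be a real function analytic on an open interval containing $a$. For $b>a$ (with $b$ in that interval), fix an antiderivative $f^{(-1)}$ of $f$ and define the characteristic numbers $c_n^f=\int_a^b f^{(n)}(x)\,dx=f^{(n-1)}(b)-f^{(n-1)}(a)$ for $n\ge 0$, and for $N\in\mathbb{N}_0$ define \[ \mathcal{A}^{f,B}_{(a,b),N}(x)=\sum_{n=0}^{N} c_n^f\,(b-a)^{n-1}\,\frac{1}{n!}\,B_n\!\left(\frac{x-a}{b-a}\right), \] where $B_n$ is the $n$-th Bernoulli polynomial. Then for every fixed $N$ and every real $x$, \[ \lim_{b\to a}\mathcal{A}^{f,B}_{(a,b),N}(x)=\sum_{k=0}^{N}\frac{f^{(k)}(a)}{k!}(x-a)^k . \]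
   Context: Bernoulli polynomials: $B_n(x)=\sum_{k=0}^{n}\binom{n}{k}B_{n-k}x^k$ where $B_j$ are the Bernoulli numbers; they satisfy $B_0=1$, $B_n'=nB_{n-1}$, $\int_0^1B_n=0$ for $n\ge1$. The term $n=0$ uses $c_0^f=\int_a^b f(x)\,dx$. *)

theory Defs
  imports "HOL-Analysis.Analysis"
begin

text \<open>Bernoulli numbers with the convention B_1 = -1/2, via the standard recurrence
  sum_{k<n+1} (n+1 choose k) B_k = 0 for n >= 1, B_0 = 1.\<close>
function bernoulli_num :: "nat \<Rightarrow> real" where
  "bernoulli_num n =
     (if n = 0 then 1
      else - (\<Sum>k<n. real (Suc n choose k) * bernoulli_num k) / real (Suc n))"
  by auto
termination by (relation "Wellfounded.measure id") auto

definition bernoulli_poly :: "nat \<Rightarrow> real \<Rightarrow> real" where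
  "bernoulli_poly n x = (\<Sum>k\<le>n. real (n choose k) * bernoulli_num (n - k) * x ^ k)"

definition real_analytic_on :: "(real \<Rightarrow> real) \<Rightarrow> real set \<Rightarrow> bool" where
  "real_analytic_on f S \<longleftrightarrow>
     (\<forall>y\<in>S. \<exists>r>0. \<exists>c::nat \<Rightarrow> real. \<forall>x. \<bar>x - y\<bar> < r \<longrightarrow> (\<lambda>n. c n * (x - y) ^ n) sums f x)"

definition char_num :: "(real \<Rightarrow> real) \<Rightarrow> real \<Rightarrow> real \<Rightarrow> nat \<Rightarrow> real" where
  "char_num f a b n = integral {a..b} ((deriv ^^ n) f)"

definition bernoulli_approx ::
  "(real \<Rightarrow> real) \<Rightarrow> real \<Rightarrow> real \<Rightarrow> nat \<Rightarrow> real \<Rightarrow> real" where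
  "bernoulli_approx f a b N x =
     (\<Sum>n\<le>N. char_num f a b n * (b - a) powi (int n - 1) / fact n
              * bernoulli_poly n ((x - a) / (b - a)))"

lemma "bernoulli_num 1 = -1/2" "bernoulli_num 2 = 1/6"
  by (simp_all add: numeral_2_eq_2)

end

theory Submission
  imports Defs
begin

text \<open>With h = b - a, the n-th term of the approximation is (c_n / h) * h^n B_n((x - a)/h) / n!.
  The first factor is the mean of f^(n) over [a, b] and tends to f^(n)(a): near a, f^(n) is the sum
  of the n times differentiated power series of f, hence continuous. The second factor is a
  polynomial in h with constant term B_0 (x - a)^n = (x - a)^n.\<close>

lemma has_field_derivative_power_series:
  fixes d :: "nat \<Rightarrow> 'a::{real_normed_field,banach}"
  assumes sums: "\<And>w. norm (w - a) < r \<Longrightarrow> (\<lambda>m. d m * (w - a) ^ m) sums g w"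
    and z: "norm (z - a) < r"
  shows "(g has_field_derivative (\<Sum>m. diffs d m * (z - a) ^ m)) (at z)"
proof -
  have "((\<lambda>w. \<Sum>m. d m * w ^ m) has_field_derivative (\<Sum>m. diffs d m * (z - a) ^ m)) (at (z + (- a)))"
    using termdiffs_strong'[of r d "z - a"] sums[of "_ + a"] z by (auto simp: sums_iff)
  then have "((\<lambda>w. \<Sum>m. d m * (w - a) ^ m) has_field_derivative (\<Sum>m. diffs d m * (z - a) ^ m)) (at z)"
    using DERIV_shift[of "\<lambda>w. \<Sum>m. d m * w ^ m" _ z "- a"] by simp
  then show ?thesis
    by (rule has_field_derivative_transform_within_open[where S = "ball a r"])
       (use z sums in \<open>auto simp: dist_norm norm_minus_commute sums_iff\<close>)
qed

lemma higher_deriv_power_series_sums: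
  fixes c :: "nat \<Rightarrow> 'a::{real_normed_field,banach}"
  assumes sums: "\<And>w. norm (w - a) < r \<Longrightarrow> (\<lambda>m. c m * (w - a) ^ m) sums f w"
    and z: "norm (z - a) < r"
  shows "(\<lambda>m. (diffs ^^ n) c m * (z - a) ^ m) sums (deriv ^^ n) f z"
  using z
proof (induction n arbitrary: z)
  case 0
  then show ?case using sums by simp
next
  case (Suc n)
  have "((deriv ^^ n) f has_field_derivative (\<Sum>m. (diffs ^^ Suc n) c m * (z - a) ^ m)) (at z)"
    using has_field_derivative_power_series[OF Suc.IH Suc.prems] by simp
  then have "(deriv ^^ Suc n) f z = (\<Sum>m. (diffs ^^ Suc n) c m * (z - a) ^ m)"
    by (simp add: DERIV_imp_deriv)
  moreover have "summable (\<lambda>m. (diffs ^^ Suc n) c m * (z - a) ^ m)"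
    using termdiff_converges[of "z - a" r] Suc sums_summable[OF Suc.IH, of "_ + a"] by auto
  ultimately show ?case by (simp add: sums_iff)
qed

lemma continuous_on_higher_deriv_power_series:
  fixes c :: "nat \<Rightarrow> 'a::{real_normed_field,banach}"
  assumes "\<And>w. norm (w - a) < r \<Longrightarrow> (\<lambda>m. c m * (w - a) ^ m) sums f w"
  shows "continuous_on (ball a r) ((deriv ^^ n) f)"
proof (rule continuous_at_imp_continuous_on, intro ballI)
  fix z assume "z \<in> ball a r"
  then have "norm (z - a) < r" by (simp add: dist_norm norm_minus_commute)
  with higher_deriv_power_series_sums[OF assms] show "isCont ((deriv ^^ n) f) z"
    by (blast intro: DERIV_isCont has_field_derivative_power_series)
qed

lemma tendsto_integral_average_at_right:
  fixes g :: "real \<Rightarrow> real"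
  assumes "continuous_on {a..a + d} g" and "d > 0"
  shows "((\<lambda>b. integral {a..b} g / (b - a)) \<longlongrightarrow> g a) (at_right a)"
proof -
  have "((\<lambda>b. integral {a..b} g) has_real_derivative g a) (at a within {a..a + d})"
    using integral_has_real_derivative[OF assms(1)] assms(2) by simp
  then have "((\<lambda>b. (integral {a..b} g - integral {a..a} g) / (b - a)) \<longlongrightarrow> g a) (at a within {a..a + d})"
    by (simp add: has_field_derivative_iff)
  then show ?thesis
    using at_within_Icc_at_right[of a "a + d"] assms(2) by simp
qed

lemma bernoulli_poly_rescaled:
  assumes "h \<noteq> 0"
  shows "h ^ n * bernoulli_poly n (y / h)
    = (\<Sum>k\<le>n. real (n choose k) * bernoulli_num (n - k) * y ^ k * h ^ (n - k))"
  unfolding bernoulli_poly_def sum_distrib_left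
proof (rule sum.cong[OF refl])
  fix k assume "k \<in> {..n}"
  then have "h ^ n = h ^ k * h ^ (n - k)" by (simp flip: power_add)
  then show "h ^ n * (real (n choose k) * bernoulli_num (n - k) * (y / h) ^ k)
      = real (n choose k) * bernoulli_num (n - k) * y ^ k * h ^ (n - k)"
    using assms by (simp add: power_divide field_simps)
qed

lemma tendsto_bernoulli_poly_rescaled:
  "((\<lambda>b. (b - a) ^ n * bernoulli_poly n (y / (b - a))) \<longlongrightarrow> y ^ n) (at a)"
proof -
  define p where "p b = (\<Sum>k\<le>n. real (n choose k) * bernoulli_num (n - k) * y ^ k * (b - a) ^ (n - k))" for b
  have "(p \<longlongrightarrow> p a) (at a)"
    unfolding p_def by (intro tendsto_intros)
  moreover have "p a = y ^ n"
    unfolding p_def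
    by (subst sum.remove[of _ n])
       (auto simp del: bernoulli_num.simps simp: bernoulli_num.simps[of 0] intro!: sum.neutral)
  moreover have "\<forall>\<^sub>F b in at a. p b = (b - a) ^ n * bernoulli_poly n (y / (b - a))"
    unfolding p_def eventually_at_filter by (simp add: bernoulli_poly_rescaled)
  ultimately show ?thesis
    using Lim_transform_eventually by metis
qed

lemma bernoulli_approx_rescaled:
  assumes "b \<noteq> a"
  shows "bernoulli_approx f a b N x = (\<Sum>n\<le>N. char_num f a b n / (b - a) / fact n
           * ((b - a) ^ n * bernoulli_poly n ((x - a) / (b - a))))"
  unfolding bernoulli_approx_def
  using assms by (intro sum.cong refl) (simp add: power_int_diff)

theorem proposition2:
  fixes f :: "real \<Rightarrow> real" and I :: "real set" and a x :: real and N :: nat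
  assumes "open I" and "is_interval I" and "a \<in> I"
    and "real_analytic_on f I"
  shows "((\<lambda>b. bernoulli_approx f a b N x) \<longlongrightarrow>
           (\<Sum>k\<le>N. (deriv ^^ k) f a / fact k * (x - a) ^ k)) (at_right a)"
proof -
  obtain r c where "r > 0" and sums: "\<And>y. \<bar>y - a\<bar> < r \<Longrightarrow> (\<lambda>m. c m * (y - a) ^ m) sums f y"
    using assms(3,4) unfolding real_analytic_on_def by blast
  have "continuous_on {a..a + r/2} ((deriv ^^ n) f)" for n
    using continuous_on_higher_deriv_power_series[of a r c f n] sums \<open>r > 0\<close>
    by (force intro: continuous_on_subset simp: dist_real_def)
  then have mean: "((\<lambda>b. char_num f a b n / (b - a)) \<longlongrightarrow> (deriv ^^ n) f a) (at_right a)" for n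
    unfolding char_num_def by (rule tendsto_integral_average_at_right) (use \<open>r > 0\<close> in simp)
  have "((\<lambda>b. (b - a) ^ n * bernoulli_poly n ((x - a) / (b - a))) \<longlongrightarrow> (x - a) ^ n) (at_right a)" for n
    using tendsto_bernoulli_poly_rescaled by (rule tendsto_mono[OF at_le, rotated]) simp
  then have "((\<lambda>b. \<Sum>n\<le>N. char_num f a b n / (b - a) / fact n
                 * ((b - a) ^ n * bernoulli_poly n ((x - a) / (b - a))))
             \<longlongrightarrow> (\<Sum>n\<le>N. (deriv ^^ n) f a / fact n * (x - a) ^ n)) (at_right a)"
    by (intro tendsto_intros mean) auto
  then show ?thesis
    by (rule Lim_transform_eventually)
       (use eventually_at_right_less in \<open>eventually_elim, simp add: bernoulli_approx_rescaled\<close>)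
qed

end
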